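(* Let $G$ consist of two parallel paths $P_1,P_2$ from $s$ to $d$ with $\mathrm{len}(P_1)<\mathrm{len}(P_2)$ (so $P_1$ is the unique shortest path), and let $l_v=0$ for all vertices $v$. Let $g\in\mathcal F$ be non-linear, i.e. $g(x)\ne x$ for some $x\in[0,1/2]$. Then there exist a factor $\lambda>1$ (depending on $g$ and the path lengths), an initial input $f_0>0$, and an initial configuration (positive pheromone levels on all edges and nonnegative initial flows) such that, with inputs $f_s(t)=b_d(t)=\lambda^t f_0$ for all $t\ge0$, the dynamics governed by $g$ satisfies that $\nu^f_{ss_1}(t)$ does not converge to $1$ as $t\to\infty$.
   Context: Model. Directed graph $G=(V,E)$ with source $s$, destination $d$; discrete time $t=0,1,\dots$; pheromone levels $p_{uv}(t)\ge0$ on edges, forward flows $f_v(t)\ge0$ and backward flows $b_v(t)\ge0$ at vertices; leakage parameters $l_v\in[0,1]$ and decay parameter $\delta\in(0,1)$. $f_s(t)$ and $b_d(t)$ are exogenous inputs. Flow update: for $v\ne s$, $f_v(t+1)=(1-l_v)\sum_{z:(z,v)\in E}f_{zv}(t)$; for $u\ne d$, $b_u(t+1)=(1-l_u)\sum_{z:(u,z)\in E}b_{uz}(t)$; pheromone update $p_{uv}(t+1)=\delta(p_{uv}(t)+f_{uv}(t)+b_{uv}(t))$. Normalized pheromone levels $\nu^f_{uv}(t)=p_{uv}(t)/\sum_{z:(u,z)\in E}p_{uz}(t)$, $\nu^b_{uv}(t)=p_{uv}(t)/\sum_{z:(z,v)\in E}p_{zv}(t)$. $\mathrm{len}(P)$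 is the number of edges of $P$. Two parallel paths: $G$ is the union of two directed paths $P_1,P_2$ from $s$ to $d$ sharing only $s$ and $d$; $s_1,s_2$ are the successors of $s$ and $d_1,d_2$ the predecessors of $d$ on $P_1,P_2$. Family $\mathcal F$: continuous, monotonically non-decreasing functions $g:[0,1/2]\to[0,1]$ with $g(0)=0$ and $g(1/2)=1/2$. The dynamics governed by $g$: at every vertex of out-degree (resp. in-degree) one, the entire forward (resp. backward) flow goes along the unique edge; at $s$, with $x=\min(\nu^f_{ss_1}(t),\nu^f_{ss_2}(t))$, the edge attaining the minimum receives forward flow $g(x)f_s(t)$ and the other edge receives $(1-g(x))f_s(t)$ (if $x=1/2$ each receives $f_s(t)/2$); at $d$ the backward flow $b_d(t)$ is split between $(d_1,d)$ and $(d_2,d)$ in the same way using $\nu^b_{d_1d}(t),\nu^b_{d_2d}(t)$. The linear decision rule corresponds to $g(x)=x$. *)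

theory Defs
  imports "HOL-Analysis.Analysis"
begin

text \<open>Vertices: the source, the destination, and internal vertices
  Mid k j = the j-th vertex (1 \<le> j < len P_k) of path P_k, k \<in> {1,2}.\<close>
datatype vtx = Src | Dst | Mid nat nat

definition plen :: "nat \<Rightarrow> nat \<Rightarrow> nat \<Rightarrow> nat" where
  "plen L1 L2 k = (if k = 1 then L1 else L2)"

definition pv :: "nat \<Rightarrow> nat \<Rightarrow> nat \<Rightarrow> nat \<Rightarrow> vtx" where
  "pv L1 L2 k j = (if j = 0 then Src else if j = plen L1 L2 k then Dst else Mid k j)"

definition edges :: "nat \<Rightarrow> nat \<Rightarrow> (vtx \<times> vtx) set" where
  "edges L1 L2 = {(pv L1 L2 k j, pv L1 L2 k (Suc j)) | k j. k \<in> {1,2} \<and> j < plen L1 L2 k}"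

definition nuf :: "(vtx \<times> vtx) set \<Rightarrow> (vtx \<times> vtx \<Rightarrow> real) \<Rightarrow> vtx \<Rightarrow> vtx \<Rightarrow> real" where
  "nuf E p u v = p (u,v) / (\<Sum>z\<in>{z. (u,z) \<in> E}. p (u,z))"

definition nub :: "(vtx \<times> vtx) set \<Rightarrow> (vtx \<times> vtx \<Rightarrow> real) \<Rightarrow> vtx \<Rightarrow> vtx \<Rightarrow> real" where
  "nub E p u v = p (u,v) / (\<Sum>z\<in>{z. (z,v) \<in> E}. p (z,v))"

definition famF :: "(real \<Rightarrow> real) \<Rightarrow> bool" where
  "famF g \<longleftrightarrow> continuous_on {0..1/2} g \<and> mono_on {0..1/2} g \<and>
     (\<forall>x\<in>{0..1/2}. 0 \<le> g x \<and> g x \<le> 1) \<and> g 0 = 0 \<and> g (1/2) = 1/2"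

text \<open>Share of the flow received by an edge with normalized level a when the
  other edge has normalized level b (a + b = 1): the edge attaining the minimum x
  gets g x, the other gets 1 - g x; on a tie each gets 1/2.\<close>
definition share :: "(real \<Rightarrow> real) \<Rightarrow> real \<Rightarrow> real \<Rightarrow> real" where
  "share g a b = (if a = b then 1/2 else if a < b then g a else 1 - g b)"

definition fedge :: "(real \<Rightarrow> real) \<Rightarrow> nat \<Rightarrow> nat \<Rightarrow> (vtx \<times> vtx \<Rightarrow> real) \<Rightarrow> (vtx \<Rightarrow> real)
    \<Rightarrow> vtx \<times> vtx \<Rightarrow> real" where
  "fedge g L1 L2 p fv e =
     (let E = edges L1 L2; s1 = pv L1 L2 1 1; s2 = pv L1 L2 2 1 in
      if fst e = Src then
        (if snd e = s1 then share g (nuf E p Src s1) (nuf E p Src s2)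
         else share g (nuf E p Src s2) (nuf E p Src s1)) * fv Src
      else fv (fst e))"

definition bedge :: "(real \<Rightarrow> real) \<Rightarrow> nat \<Rightarrow> nat \<Rightarrow> (vtx \<times> vtx \<Rightarrow> real) \<Rightarrow> (vtx \<Rightarrow> real)
    \<Rightarrow> vtx \<times> vtx \<Rightarrow> real" where
  "bedge g L1 L2 p bv e =
     (let E = edges L1 L2; d1 = pv L1 L2 1 (L1 - 1); d2 = pv L1 L2 2 (L2 - 1) in
      if snd e = Dst then
        (if fst e = d1 then share g (nub E p d1 Dst) (nub E p d2 Dst)
         else share g (nub E p d2 Dst) (nub E p d1 Dst)) * bv Dst
      else bv (snd e))"

text \<open>Trajectory: state (p(t), f(t), b(t)). Parameters: g, path lengths,
  leakage l, decay delta, exogenous inputs fin = f_s, bin = b_d, initial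
  pheromones p0 and initial vertex flows f0, b0.\<close>
fun traj :: "(real \<Rightarrow> real) \<Rightarrow> nat \<Rightarrow> nat \<Rightarrow> (vtx \<Rightarrow> real) \<Rightarrow> real \<Rightarrow> (nat \<Rightarrow> real) \<Rightarrow> (nat \<Rightarrow> real)
    \<Rightarrow> (vtx \<times> vtx \<Rightarrow> real) \<Rightarrow> (vtx \<Rightarrow> real) \<Rightarrow> (vtx \<Rightarrow> real) \<Rightarrow> nat
    \<Rightarrow> (vtx \<times> vtx \<Rightarrow> real) \<times> (vtx \<Rightarrow> real) \<times> (vtx \<Rightarrow> real)" where
  "traj g L1 L2 l \<delta> fin bin p0 f0 b0 0 = (p0, f0(Src := fin 0), b0(Dst := bin 0))"
| "traj g L1 L2 l \<delta> fin bin p0 f0 b0 (Suc t) =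
     (let (p, fv, bv) = traj g L1 L2 l \<delta> fin bin p0 f0 b0 t; E = edges L1 L2 in
       (\<lambda>e. \<delta> * (p e + fedge g L1 L2 p fv e + bedge g L1 L2 p bv e),
        \<lambda>v. if v = Src then fin (Suc t)
            else (1 - l v) * (\<Sum>z\<in>{z. (z,v) \<in> E}. fedge g L1 L2 p fv (z,v)),
        \<lambda>u. if u = Dst then bin (Suc t)
            else (1 - l u) * (\<Sum>z\<in>{z. (u,z) \<in> E}. bedge g L1 L2 p bv (u,z))))"

end

theory Submission
  imports Defs
begin

(* With inputs growing like \<lambda>^t, \<lambda> = 1/\<mu>, the dynamics admits a self-similar solution: the
   state at time t is \<lambda>^t times a fixed profile in which path k receives a share u_k of the
   forward and backward input and the flow drops by a factor \<mu> per edge travelled.  Along such a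
   solution the normalized level \<nu>(s,s_1) is a constant r, and the profile is consistent exactly
   when r = u a_1 / (u a_1 + (1 - u) a_2) with u = share g r (1 - r) and a_k = 1 + \<mu>^(len P_k - 1).
   At r = 1/2 this self-consistency fails in favour of the shorter path (a_1 > a_2), whereas at a
   point where the split rule lies strictly below the diagonal it fails the other way once \<mu> is
   close to 1; the intermediate value theorem then yields a consistent r < 1.  For linear g no such
   point exists, which is why non-linearity is needed. *)

section \<open>The split rule and the self-consistency equation\<close>

lemma share_swap: "share g (1 - r) r = 1 - share g r (1 - r)"
  by (auto simp: share_def)

lemma share_eq_if:
  assumes "g (1/2) = 1/2"
  shows "share g r (1 - r) = (if r \<le> 1/2 then g r else 1 - g (1 - r))"
proof -
  have "?thesis" if "r = 1/2" unfolding that using assms by (simp add: share_def)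
  then show ?thesis by (auto simp: share_def)
qed

lemma share_bounds:
  assumes "famF g" "0 \<le> r" "r \<le> 1"
  shows "0 \<le> share g r (1 - r)" "share g r (1 - r) \<le> 1"
  using assms unfolding famF_def share_def
  by (auto dest!: bspec[of _ _ r] bspec[of _ _ "1 - r"])

lemma continuous_on_share:
  assumes "famF g"
  shows "continuous_on {0..1} (\<lambda>r. share g r (1 - r))"
proof -
  have g: "continuous_on {0..1/2} g" "g (1/2) = 1/2" using assms by (auto simp: famF_def)
  have "continuous_on {0..1} (\<lambda>r. if r \<le> 1/2 then g r else 1 - g (1 - r))"
  proof (rule continuous_on_cases_le)
    show "continuous_on {r \<in> {0..1}. r \<le> 1/2} g"
      by (rule continuous_on_subset[OF g(1)]) auto
    show "continuous_on {r \<in> {0..1}. 1/2 \<le> r} (\<lambda>r. 1 - g (1 - r))"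
      by (intro continuous_intros continuous_on_compose2[OF g(1)]) auto
    show "g r = 1 - g (1 - r)" if "r \<in> {0..1}" "r = 1/2" for r
      unfolding that(2) using g(2) by simp
  qed (auto intro: continuous_intros)
  then show ?thesis using share_eq_if[of g, OF g(2)] by simp
qed

lemma share_below_diagonal:
  assumes "famF g" and "\<exists>x\<in>{0..1/2}. g x \<noteq> x"
  obtains y where "0 < y" "y < 1" "share g y (1 - y) < y"
proof -
  obtain x where x: "0 \<le> x" "x \<le> 1/2" "g x \<noteq> x" using assms(2) by auto
  have g: "g 0 = 0" "g (1/2) = 1/2" using assms(1) by (auto simp: famF_def)
  have x': "0 < x" "x < 1/2"
    using x g by (metis order.not_eq_order_implies_strict)+
  show thesis
  proof (cases "g x < x")
    case True
    then show thesis using that[of x] x' by (simp add: share_def)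
  next
    case False
    then have "x < g x" using x(3) by simp
    then show thesis using that[of "1 - x"] x' by (simp add: share_def)
  qed
qed

(* Zero iff r = u a_1 / (u a_1 + (1 - u) a_2) with u = share g r (1 - r) and a_k = 1 + \<mu>^n_k,
   the normalized level at s of the self-similar profile when n_k = len P_k - 1. *)
definition stationary_gap :: "(real \<Rightarrow> real) \<Rightarrow> nat \<Rightarrow> nat \<Rightarrow> real \<Rightarrow> real \<Rightarrow> real" where
  "stationary_gap g n1 n2 \<mu> r =
     r * (share g r (1 - r) * (1 + \<mu> ^ n1) + (1 - share g r (1 - r)) * (1 + \<mu> ^ n2))
     - share g r (1 - r) * (1 + \<mu> ^ n1)"

lemma stationary_gap_half:
  assumes "n1 < n2" "0 < \<mu>" "\<mu> < 1"
  shows "stationary_gap g n1 n2 \<mu> (1/2) < 0"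
proof -
  have "\<mu> ^ n2 < \<mu> ^ n1" using assms by (rule power_strict_decreasing)
  then show ?thesis by (simp add: stationary_gap_def share_def field_simps)
qed

lemma stationary_gap_pos_near_one:
  assumes "share g y (1 - y) < y"
  obtains \<mu> where "0 < \<mu>" "\<mu> < 1" "0 < stationary_gap g n1 n2 \<mu> y"
proof -
  have "((\<lambda>\<mu>. stationary_gap g n1 n2 \<mu> y) \<longlongrightarrow> stationary_gap g n1 n2 1 y) (at_left 1)"
    unfolding stationary_gap_def by (intro tendsto_intros)
  moreover have "stationary_gap g n1 n2 1 y = 2 * (y - share g y (1 - y))"
    by (simp add: stationary_gap_def algebra_simps)
  ultimately have "eventually (\<lambda>\<mu>. 0 < stationary_gap g n1 n2 \<mu> y) (at_left 1)"
    using assms by (intro order_tendstoD(1)) auto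
  moreover have "eventually (\<lambda>\<mu>. \<mu> \<in> {0<..<1}) (at_left (1::real))"
    by (rule eventually_at_left_real) simp
  ultimately obtain \<mu> where "\<mu> \<in> {0<..<1}" "0 < stationary_gap g n1 n2 \<mu> y"
    using eventually_happens'[OF trivial_limit_at_left_real eventually_conj] by blast
  then show thesis using that by auto
qed

lemma stationary_gap_root_exists:
  assumes "famF g" "\<exists>x\<in>{0..1/2}. g x \<noteq> x" "n1 < n2"
  obtains \<mu> r where "0 < \<mu>" "\<mu> < 1" "0 < r" "r < 1" "stationary_gap g n1 n2 \<mu> r = 0"
proof -
  obtain y where y: "0 < y" "y < 1" "share g y (1 - y) < y"
    using share_below_diagonal[OF assms(1,2)] by blast
  obtain \<mu> where \<mu>: "0 < \<mu>" "\<mu> < 1" "0 < stationary_gap g n1 n2 \<mu> y"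
    using stationary_gap_pos_near_one[OF y(3)] by blast
  have seg: "closed_segment y (1/2) \<subseteq> {0<..<1}"
    using y by (auto simp: closed_segment_eq_real_ivl)
  have "continuous_on {0..1} (stationary_gap g n1 n2 \<mu>)"
    unfolding stationary_gap_def
    by (intro continuous_intros continuous_on_share[OF assms(1)])
  then have "continuous_on (closed_segment y (1/2)) (stationary_gap g n1 n2 \<mu>)"
    by (rule continuous_on_subset) (use seg in auto)
  moreover have "0 \<in> closed_segment (stationary_gap g n1 n2 \<mu> y) (stationary_gap g n1 n2 \<mu> (1/2))"
    using \<mu>(3) stationary_gap_half[OF assms(3) \<mu>(1,2), of g] by (auto simp: closed_segment_eq_real_ivl)
  ultimately obtain r where "r \<in> closed_segment y (1/2)" "stationary_gap g n1 n2 \<mu> r = 0"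
    using IVT'_closed_segment_real by blast
  with seg have "r \<in> {0<..<1}" "stationary_gap g n1 n2 \<mu> r = 0" by auto
  then show thesis using that \<mu>(1,2) by auto
qed

lemma share_at_gap_root:
  assumes "famF g" "0 < r" "r < 1" "0 \<le> \<mu>" "stationary_gap g n1 n2 \<mu> r = 0"
  shows "0 < share g r (1 - r)" "share g r (1 - r) < 1"
proof -
  have u: "0 \<le> share g r (1 - r)" "share g r (1 - r) \<le> 1"
    using share_bounds[OF assms(1)] assms(2,3) by auto
  have pos: "0 < 1 + \<mu> ^ n" for n using assms(4) by (simp add: add_pos_nonneg)
  have "share g r (1 - r) \<noteq> 0"
  proof
    assume "share g r (1 - r) = 0"
    then have "r * (1 + \<mu> ^ n2) = 0" using assms(5) by (simp add: stationary_gap_def)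
    then show False using assms(2) pos[of n2] by simp
  qed
  moreover have "share g r (1 - r) \<noteq> 1"
  proof
    assume "share g r (1 - r) = 1"
    then have "r * (1 + \<mu> ^ n1) = 1 + \<mu> ^ n1" using assms(5) by (simp add: stationary_gap_def)
    then show False using assms(3) pos[of n1] by simp
  qed
  ultimately show "0 < share g r (1 - r)" "share g r (1 - r) < 1" using u by auto
qed

section \<open>The two parallel paths\<close>

lemma plen_simps [simp]: "plen L1 L2 1 = L1" "plen L1 L2 (Suc 0) = L1" "plen L1 L2 2 = L2"
  by (auto simp: plen_def)

lemma pv_eq_Src_iff: "pv L1 L2 k j = Src \<longleftrightarrow> j = 0"
  by (auto simp: pv_def)

lemma pv_eq_Dst_iff: "pv L1 L2 k j = Dst \<longleftrightarrow> j \<noteq> 0 \<and> j = plen L1 L2 k"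
  by (auto simp: pv_def)

lemma pv_eq_Mid_iff: "pv L1 L2 k j = Mid k' j' \<longleftrightarrow> k' = k \<and> j' = j \<and> j \<noteq> 0 \<and> j \<noteq> plen L1 L2 k"
  by (auto simp: pv_def)

lemma pv_0 [simp]: "pv L1 L2 k 0 = Src"
  by (simp add: pv_def)

lemma pv_plen [simp]: "0 < plen L1 L2 k \<Longrightarrow> pv L1 L2 k (plen L1 L2 k) = Dst"
  by (simp add: pv_def)

lemma path_edge_in_edges: "k \<in> {1,2} \<Longrightarrow> j < plen L1 L2 k \<Longrightarrow> (pv L1 L2 k j, pv L1 L2 k (Suc j)) \<in> edges L1 L2"
  by (auto simp: edges_def)

lemma edges_cases:
  assumes "(u, v) \<in> edges L1 L2"
  obtains k j where "k \<in> {1,2}" "j < plen L1 L2 k" "u = pv L1 L2 k j" "v = pv L1 L2 k (Suc j)"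
  using assms by (auto simp: edges_def)

lemma pv_Mid: "0 < j \<Longrightarrow> j < plen L1 L2 k \<Longrightarrow> pv L1 L2 k j = Mid k j"
  by (simp add: pv_def)

lemma predecessors_Mid:
  assumes "k \<in> {1,2}" "0 < j" "j < plen L1 L2 k"
  shows "{z. (z, Mid k j) \<in> edges L1 L2} = {pv L1 L2 k (j - 1)}"
proof (intro equalityI subsetI)
  fix z assume "z \<in> {z. (z, Mid k j) \<in> edges L1 L2}"
  then obtain k' j' where "z = pv L1 L2 k' j'" "pv L1 L2 k' (Suc j') = Mid k j"
    by (metis edges_cases mem_Collect_eq)
  then show "z \<in> {pv L1 L2 k (j - 1)}" by (auto simp: pv_eq_Mid_iff)
next
  fix z assume "z \<in> {pv L1 L2 k (j - 1)}"
  then show "z \<in> {z. (z, Mid k j) \<in> edges L1 L2}"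
    using path_edge_in_edges[of k "j - 1" L1 L2] pv_Mid[of j L1 L2 k] assms by auto
qed

lemma successors_Mid:
  assumes "k \<in> {1,2}" "0 < j" "j < plen L1 L2 k"
  shows "{z. (Mid k j, z) \<in> edges L1 L2} = {pv L1 L2 k (Suc j)}"
proof (intro equalityI subsetI)
  fix z assume "z \<in> {z. (Mid k j, z) \<in> edges L1 L2}"
  then obtain k' j' where "pv L1 L2 k' j' = Mid k j" "z = pv L1 L2 k' (Suc j')"
    by (metis edges_cases mem_Collect_eq)
  then show "z \<in> {pv L1 L2 k (Suc j)}" by (auto simp: pv_eq_Mid_iff)
next
  fix z assume "z \<in> {pv L1 L2 k (Suc j)}"
  then show "z \<in> {z. (Mid k j, z) \<in> edges L1 L2}"
    using path_edge_in_edges[of k j L1 L2] pv_Mid[of j L1 L2 k] assms by auto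
qed

context
  fixes L1 L2 :: nat
  assumes lengths: "1 \<le> L1" "L1 < L2"
begin

lemma successors_Src: "{z. (Src, z) \<in> edges L1 L2} = {pv L1 L2 1 1, pv L1 L2 2 1}"
proof (intro equalityI subsetI)
  fix z assume "z \<in> {z. (Src, z) \<in> edges L1 L2}"
  then obtain k j where "k \<in> {1,2}" "pv L1 L2 k j = Src" "z = pv L1 L2 k (Suc j)"
    by (metis edges_cases mem_Collect_eq)
  then show "z \<in> {pv L1 L2 1 1, pv L1 L2 2 1}" by (auto simp: pv_eq_Src_iff)
next
  have first_edge: "(pv L1 L2 k 0, pv L1 L2 k 1) \<in> edges L1 L2" if "k \<in> {1,2}" for k
    using path_edge_in_edges[of k 0 L1 L2] that lengths by (auto simp: plen_def)
  fix z assume "z \<in> {pv L1 L2 1 1, pv L1 L2 2 1}"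
  then show "z \<in> {z. (Src, z) \<in> edges L1 L2}" using first_edge[of 1] first_edge[of 2] by auto
qed

lemma predecessors_Dst: "{z. (z, Dst) \<in> edges L1 L2} = {pv L1 L2 1 (L1 - 1), pv L1 L2 2 (L2 - 1)}"
proof (intro equalityI subsetI)
  fix z assume "z \<in> {z. (z, Dst) \<in> edges L1 L2}"
  then obtain k j where "k \<in> {1,2}" "z = pv L1 L2 k j" "pv L1 L2 k (Suc j) = Dst"
    by (metis edges_cases mem_Collect_eq)
  then show "z \<in> {pv L1 L2 1 (L1 - 1), pv L1 L2 2 (L2 - 1)}"
    by (auto simp: pv_eq_Dst_iff)
next
  have last_edge: "(pv L1 L2 k (plen L1 L2 k - 1), Dst) \<in> edges L1 L2" if "k \<in> {1,2}" for k
    using path_edge_in_edges[of k "plen L1 L2 k - 1" L1 L2] pv_plen[of L1 L2 k] that lengths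
    by (auto simp: plen_def)
  fix z assume "z \<in> {pv L1 L2 1 (L1 - 1), pv L1 L2 2 (L2 - 1)}"
  then show "z \<in> {z. (z, Dst) \<in> edges L1 L2}" using last_edge[of 1] last_edge[of 2] by auto
qed

lemma first_vertices_distinct: "pv L1 L2 1 1 \<noteq> pv L1 L2 2 1"
  using lengths by (auto simp: pv_def)

lemma last_vertices_distinct: "pv L1 L2 1 (L1 - 1) \<noteq> pv L1 L2 2 (L2 - 1)"
  using lengths by (auto simp: pv_def)

end

section \<open>The self-similar solution\<close>

locale self_similar_flow =
  fixes g :: "real \<Rightarrow> real" and L1 L2 :: nat and \<delta> \<mu> r :: real
  assumes lengths: "1 \<le> L1" "L1 < L2"
    and decay: "0 < \<delta>" "\<delta> < 1"
    and ratio: "0 < \<mu>" "\<mu> < 1"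
    and share_strict: "0 < share g r (1 - r)" "share g r (1 - r) < 1"
    and gap_root: "stationary_gap g (L1 - 1) (L2 - 1) \<mu> r = 0"
begin

(* Path k carries the share
   path_share k of both inputs; the forward flow on its j-th edge entered at s j steps earlier and
   the backward flow at its j-th vertex entered at d (len P_k - j) steps earlier, hence the powers
   of \<mu>.  \<kappa> solves \<delta> (\<kappa> + 1) = \<kappa> / \<mu>, so the pheromone update maps c * pher to (c / \<mu>) * pher. *)
definition path_share :: "nat \<Rightarrow> real" where
  "path_share k = (if k = 1 then share g r (1 - r) else 1 - share g r (1 - r))"

definition fwd :: "nat \<Rightarrow> nat \<Rightarrow> real" where
  "fwd k j = path_share k * \<mu> ^ j"

definition bwd :: "nat \<Rightarrow> nat \<Rightarrow> real" where
  "bwd k j = path_share k * \<mu> ^ (plen L1 L2 k - j)"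

definition \<kappa> :: real where
  "\<kappa> = \<delta> * \<mu> / (1 - \<delta> * \<mu>)"

definition pher :: "nat \<Rightarrow> nat \<Rightarrow> real" where
  "pher k j = \<kappa> * (fwd k j + bwd k (Suc j))"

definition self_similar :: "real \<Rightarrow> (vtx \<times> vtx \<Rightarrow> real) \<Rightarrow> (vtx \<Rightarrow> real) \<Rightarrow> (vtx \<Rightarrow> real) \<Rightarrow> bool" where
  "self_similar c p fv bv \<longleftrightarrow>
     (\<forall>k\<in>{1,2}. \<forall>j<plen L1 L2 k. p (pv L1 L2 k j, pv L1 L2 k (Suc j)) = c * pher k j) \<and>
     (\<forall>k\<in>{1,2}. \<forall>j. 0 < j \<and> j < plen L1 L2 k \<longrightarrow>
        fv (Mid k j) = c * fwd k j \<and> bv (Mid k j) = c * bwd k j) \<and>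
     fv Src = c \<and> bv Dst = c"

lemma \<kappa>_pos: "0 < \<kappa>"
  using decay ratio mult_strict_mono[of \<delta> 1 \<mu> 1] by (simp add: \<kappa>_def)

lemma \<kappa>_fixed_point: "\<delta> * (\<kappa> + 1) = \<kappa> / \<mu>"
proof -
  have "\<delta> * \<mu> < 1" using decay ratio mult_strict_mono[of \<delta> 1 \<mu> 1] by simp
  then show ?thesis using ratio by (simp add: \<kappa>_def field_simps)
qed

lemma path_share_pos: "0 < path_share k"
  using share_strict by (simp add: path_share_def)

lemma pher_pos: "0 < pher k j"
  using \<kappa>_pos path_share_pos ratio by (simp add: pher_def fwd_def bwd_def add_pos_pos)

lemma pher_end_edges:
  "pher k 0 = \<kappa> * path_share k * (1 + \<mu> ^ (plen L1 L2 k - 1))"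
  "pher k (plen L1 L2 k - 1) = \<kappa> * path_share k * (1 + \<mu> ^ (plen L1 L2 k - 1))"
  using lengths by (auto simp: pher_def fwd_def bwd_def plen_def algebra_simps)

lemma pher_ratio: "pher 1 0 / (pher 1 0 + pher 2 0) = r"
proof -
  define a where "a = share g r (1 - r) * (1 + \<mu> ^ (L1 - 1))"
  define b where "b = (1 - share g r (1 - r)) * (1 + \<mu> ^ (L2 - 1))"
  have "pher 1 0 = \<kappa> * a" "pher 2 0 = \<kappa> * b"
    by (simp_all add: pher_end_edges a_def b_def path_share_def)
  then have "pher 1 0 / (pher 1 0 + pher 2 0) = a / (a + b)"
    using \<kappa>_pos by (simp flip: distrib_left)
  moreover have "0 < a + b"
    using share_strict ratio by (simp add: a_def b_def add_pos_pos)
  moreover have "r * (a + b) = a"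
    using gap_root by (simp add: stationary_gap_def a_def b_def)
  ultimately show ?thesis by (metis divide_eq_imp less_irrefl)
qed

lemma pher_ratio_complement: "pher 2 0 / (pher 1 0 + pher 2 0) = 1 - r"
proof -
  have "0 < pher 1 0 + pher 2 0" using pher_pos by (simp add: add_pos_pos)
  then show ?thesis using pher_ratio by (simp add: field_simps)
qed

lemma self_similar_pheromone:
  "self_similar c p fv bv \<Longrightarrow> k \<in> {1,2} \<Longrightarrow> j < plen L1 L2 k \<Longrightarrow>
    p (pv L1 L2 k j, pv L1 L2 k (Suc j)) = c * pher k j"
  unfolding self_similar_def by blast

lemma nuf_self_similar:
  assumes "self_similar c p fv bv" "0 < c"
  shows "nuf (edges L1 L2) p Src (pv L1 L2 1 1) = r"
    and "nuf (edges L1 L2) p Src (pv L1 L2 2 1) = 1 - r"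
proof -
  have p: "p (Src, pv L1 L2 k 1) = c * pher k 0" if "k \<in> {1,2}" for k
    using self_similar_pheromone[OF assms(1) that, of 0] that lengths by (auto simp: plen_def)
  have "(\<Sum>z\<in>{z. (Src, z) \<in> edges L1 L2}. p (Src, z)) = c * (pher 1 0 + pher 2 0)"
    using p[of 1] p[of 2] first_vertices_distinct[OF lengths]
    by (simp add: successors_Src[OF lengths] distrib_left)
  then show "nuf (edges L1 L2) p Src (pv L1 L2 1 1) = r"
    and "nuf (edges L1 L2) p Src (pv L1 L2 2 1) = 1 - r"
    using p[of 1] p[of 2] assms(2) pher_ratio pher_ratio_complement by (simp_all add: nuf_def)
qed

lemma nub_self_similar:
  assumes "self_similar c p fv bv" "0 < c"
  shows "nub (edges L1 L2) p (pv L1 L2 1 (L1 - 1)) Dst = r"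
    and "nub (edges L1 L2) p (pv L1 L2 2 (L2 - 1)) Dst = 1 - r"
proof -
  have p: "p (pv L1 L2 k (plen L1 L2 k - 1), Dst) = c * pher k 0" if "k \<in> {1,2}" for k
    using self_similar_pheromone[OF assms(1) that, of "plen L1 L2 k - 1"] pv_plen[of L1 L2 k]
      pher_end_edges[of k] that lengths by (auto simp: plen_def)
  have "(\<Sum>z\<in>{z. (z, Dst) \<in> edges L1 L2}. p (z, Dst)) = c * (pher 1 0 + pher 2 0)"
    using p[of 1] p[of 2] last_vertices_distinct[OF lengths]
    by (simp add: predecessors_Dst[OF lengths] distrib_left)
  then show "nub (edges L1 L2) p (pv L1 L2 1 (L1 - 1)) Dst = r"
    and "nub (edges L1 L2) p (pv L1 L2 2 (L2 - 1)) Dst = 1 - r"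
    using p[of 1] p[of 2] assms(2) pher_ratio pher_ratio_complement by (simp_all add: nub_def)
qed

lemma self_similar_flows:
  "self_similar c p fv bv \<Longrightarrow> k \<in> {1,2} \<Longrightarrow> 0 < j \<Longrightarrow> j < plen L1 L2 k \<Longrightarrow>
    fv (Mid k j) = c * fwd k j \<and> bv (Mid k j) = c * bwd k j"
  unfolding self_similar_def by blast

lemma fedge_self_similar:
  assumes "self_similar c p fv bv" "0 < c" "k \<in> {1,2}" "j < plen L1 L2 k"
  shows "fedge g L1 L2 p fv (pv L1 L2 k j, pv L1 L2 k (Suc j)) = c * fwd k j"
proof (cases "j = 0")
  case True
  have "fv Src = c" using assms(1) by (simp add: self_similar_def)
  then show ?thesis
    using assms(3) True nuf_self_similar[OF assms(1,2)] first_vertices_distinct[OF lengths]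
    by (auto simp: fedge_def fwd_def path_share_def share_swap Let_def)
next
  case False
  then show ?thesis
    using self_similar_flows[OF assms(1,3) _ assms(4)] pv_Mid[OF _ assms(4)]
    by (simp add: fedge_def)
qed

lemma bedge_self_similar:
  assumes "self_similar c p fv bv" "0 < c" "k \<in> {1,2}" "j < plen L1 L2 k"
  shows "bedge g L1 L2 p bv (pv L1 L2 k j, pv L1 L2 k (Suc j)) = c * bwd k (Suc j)"
proof (cases "Suc j = plen L1 L2 k")
  case True
  have "bv Dst = c" using assms(1) by (simp add: self_similar_def)
  moreover have "j = plen L1 L2 k - 1" "pv L1 L2 k (Suc j) = Dst" using True by auto
  ultimately show ?thesis
    using assms(3) True nub_self_similar[OF assms(1,2)] last_vertices_distinct[OF lengths]
    by (auto simp: bedge_def bwd_def path_share_def share_swap Let_def)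
next
  case False
  then show ?thesis
    using self_similar_flows[OF assms(1,3), of "Suc j"] pv_Mid[of "Suc j" L1 L2 k] assms(4)
    by (simp add: bedge_def)
qed

lemma pheromone_update_self_similar:
  assumes "self_similar c p fv bv" "0 < c" "k \<in> {1,2}" "j < plen L1 L2 k"
  shows "\<delta> * (p (pv L1 L2 k j, pv L1 L2 k (Suc j))
            + fedge g L1 L2 p fv (pv L1 L2 k j, pv L1 L2 k (Suc j))
            + bedge g L1 L2 p bv (pv L1 L2 k j, pv L1 L2 k (Suc j)))
         = c / \<mu> * pher k j"
proof -
  have "\<delta> * (c * pher k j + c * fwd k j + c * bwd k (Suc j))
      = c * (\<delta> * (\<kappa> + 1)) * (fwd k j + bwd k (Suc j))"
    by (simp add: pher_def algebra_simps)
  also have "\<dots> = c / \<mu> * pher k j"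
    by (simp add: \<kappa>_fixed_point pher_def)
  finally show ?thesis
    using self_similar_pheromone[OF assms(1,3,4)] fedge_self_similar[OF assms]
      bedge_self_similar[OF assms] by simp
qed

lemma forward_inflow_self_similar:
  assumes "self_similar c p fv bv" "0 < c" "k \<in> {1,2}" "0 < j" "j < plen L1 L2 k"
  shows "(\<Sum>z\<in>{z. (z, Mid k j) \<in> edges L1 L2}. fedge g L1 L2 p fv (z, Mid k j)) = c / \<mu> * fwd k j"
proof -
  have "(\<Sum>z\<in>{z. (z, Mid k j) \<in> edges L1 L2}. fedge g L1 L2 p fv (z, Mid k j))
      = fedge g L1 L2 p fv (pv L1 L2 k (j - 1), pv L1 L2 k (Suc (j - 1)))"
    using predecessors_Mid[OF assms(3-5)] pv_Mid[OF assms(4,5)] assms(4) by simp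
  also have "\<dots> = c * fwd k (j - 1)"
    using fedge_self_similar[OF assms(1-3), of "j - 1"] assms(5) by simp
  also have "\<dots> = c / \<mu> * fwd k j"
    using ratio assms(4) by (cases j) (simp_all add: fwd_def)
  finally show ?thesis .
qed

lemma backward_inflow_self_similar:
  assumes "self_similar c p fv bv" "0 < c" "k \<in> {1,2}" "0 < j" "j < plen L1 L2 k"
  shows "(\<Sum>z\<in>{z. (Mid k j, z) \<in> edges L1 L2}. bedge g L1 L2 p bv (Mid k j, z)) = c / \<mu> * bwd k j"
proof -
  have "(\<Sum>z\<in>{z. (Mid k j, z) \<in> edges L1 L2}. bedge g L1 L2 p bv (Mid k j, z))
      = bedge g L1 L2 p bv (pv L1 L2 k j, pv L1 L2 k (Suc j))"
    using successors_Mid[OF assms(3-5)] pv_Mid[OF assms(4,5)] by simp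
  also have "\<dots> = c * bwd k (Suc j)"
    using bedge_self_similar[OF assms(1-3,5)] .
  also have "\<dots> = c / \<mu> * bwd k j"
  proof -
    have "plen L1 L2 k - j = Suc (plen L1 L2 k - Suc j)" using assms(5) by simp
    then show ?thesis using ratio by (simp add: bwd_def)
  qed
  finally show ?thesis .
qed

lemma self_similar_step:
  assumes "self_similar c p fv bv" "0 < c"
  shows "self_similar (c / \<mu>)
     (\<lambda>e. \<delta> * (p e + fedge g L1 L2 p fv e + bedge g L1 L2 p bv e))
     (\<lambda>v. if v = Src then c / \<mu> else (\<Sum>z\<in>{z. (z, v) \<in> edges L1 L2}. fedge g L1 L2 p fv (z, v)))
     (\<lambda>u. if u = Dst then c / \<mu> else (\<Sum>z\<in>{z. (u, z) \<in> edges L1 L2}. bedge g L1 L2 p bv (u, z)))"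
  unfolding self_similar_def
  using pheromone_update_self_similar[OF assms] forward_inflow_self_similar[OF assms]
    backward_inflow_self_similar[OF assms]
  by simp

definition init_pheromone :: "vtx \<times> vtx \<Rightarrow> real" where
  "init_pheromone = (\<lambda>(u, v). case u of
      Src \<Rightarrow> if v = pv L1 L2 1 1 then pher 1 0 else pher 2 0
    | Mid k j \<Rightarrow> pher k j
    | Dst \<Rightarrow> 1)" \<comment> \<open>no edge leaves Dst\<close>

definition init_fwd :: "vtx \<Rightarrow> real" where
  "init_fwd v = (case v of Mid k j \<Rightarrow> fwd k j | _ \<Rightarrow> 0)"

definition init_bwd :: "vtx \<Rightarrow> real" where
  "init_bwd v = (case v of Mid k j \<Rightarrow> bwd k j | _ \<Rightarrow> 0)"

lemma init_pheromone_pos: "0 < init_pheromone e"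
  using pher_pos by (auto simp: init_pheromone_def split: prod.splits vtx.splits)

lemma init_flows_nonneg: "0 \<le> init_fwd v" "0 \<le> init_bwd v"
  using path_share_pos ratio by (auto simp: init_fwd_def init_bwd_def fwd_def bwd_def less_imp_le split: vtx.splits)

lemma self_similar_init: "self_similar 1 init_pheromone (init_fwd(Src := 1)) (init_bwd(Dst := 1))"
  unfolding self_similar_def
proof (intro conjI ballI allI impI)
  fix k j assume "k \<in> {1,2}" "j < plen L1 L2 k"
  then show "init_pheromone (pv L1 L2 k j, pv L1 L2 k (Suc j)) = 1 * pher k j"
    using first_vertices_distinct[OF lengths]
    by (cases "j = 0") (auto simp: init_pheromone_def pv_Mid)
qed (auto simp: init_fwd_def init_bwd_def)

abbreviation trajectory :: "nat \<Rightarrow> (vtx \<times> vtx \<Rightarrow> real) \<times> (vtx \<Rightarrow> real) \<times> (vtx \<Rightarrow> real)" where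
  "trajectory \<equiv> traj g L1 L2 (\<lambda>_. 0) \<delta> (\<lambda>t. (1 / \<mu>) ^ t * 1) (\<lambda>t. (1 / \<mu>) ^ t * 1)
     init_pheromone init_fwd init_bwd"

lemma self_similar_trajectory:
  "self_similar ((1 / \<mu>) ^ t) (fst (trajectory t)) (fst (snd (trajectory t))) (snd (snd (trajectory t)))"
proof (induction t)
  case 0
  show ?case using self_similar_init by (simp add: fun_upd_def)
next
  case (Suc t)
  obtain p fv bv where state: "trajectory t = (p, fv, bv)" by (metis prod_cases3)
  have pos: "0 < (1 / \<mu>) ^ t" using ratio by simp
  have step: "trajectory (Suc t) =
      (\<lambda>e. \<delta> * (p e + fedge g L1 L2 p fv e + bedge g L1 L2 p bv e),
       \<lambda>v. if v = Src then (1 / \<mu>) ^ t / \<mu> else (\<Sum>z\<in>{z. (z, v) \<in> edges L1 L2}. fedge g L1 L2 p fv (z, v)),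
       \<lambda>u. if u = Dst then (1 / \<mu>) ^ t / \<mu> else (\<Sum>z\<in>{z. (u, z) \<in> edges L1 L2}. bedge g L1 L2 p bv (u, z)))"
    using state by (simp add: Let_def fun_eq_iff)
  show ?case
    using self_similar_step[OF Suc[unfolded state, simplified] pos] unfolding step by simp
qed

lemma level_at_source_constant: "nuf (edges L1 L2) (fst (trajectory t)) Src (pv L1 L2 1 1) = r"
  using nuf_self_similar(1)[OF self_similar_trajectory] ratio by simp

lemma level_below_one: "r < 1"
proof -
  have "0 < pher 1 0" "0 < pher 2 0" by (rule pher_pos)+
  then have "pher 1 0 / (pher 1 0 + pher 2 0) < 1" by (simp add: divide_less_eq_1_pos)
  then show ?thesis by (simp only: pher_ratio)
qed

lemma nonconvergent_configuration_exists:
  "\<exists>f0 p0 fi bi. f0 > 0 \<and> (\<forall>e\<in>edges L1 L2. p0 e > 0) \<and> (\<forall>v. fi v \<ge> 0 \<and> bi v \<ge> 0) \<and>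
     \<not> ((\<lambda>t. nuf (edges L1 L2)
            (fst (traj g L1 L2 (\<lambda>_. 0) \<delta> (\<lambda>t. (1 / \<mu>) ^ t * f0) (\<lambda>t. (1 / \<mu>) ^ t * f0) p0 fi bi t))
            Src (pv L1 L2 1 1)) \<longlonglongrightarrow> 1)"
proof -
  have "\<not> (\<lambda>t. nuf (edges L1 L2) (fst (trajectory t)) Src (pv L1 L2 1 1)) \<longlonglongrightarrow> 1"
    unfolding level_at_source_constant using level_below_one by (simp add: LIMSEQ_const_iff)
  then show ?thesis
    using init_pheromone_pos init_flows_nonneg
    by (intro exI[of _ 1] exI[of _ init_pheromone] exI[of _ init_fwd] exI[of _ init_bwd]) simp
qed

end

theorem proposition3:
  fixes L1 L2 :: nat and g :: "real \<Rightarrow> real"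
  assumes "1 \<le> L1" and "L1 < L2"
    and "famF g"
    and "\<exists>x\<in>{0..1/2}. g x \<noteq> x"
  shows "\<exists>lam::real. lam > 1 \<and>
    (\<forall>\<delta>::real. 0 < \<delta> \<and> \<delta> < 1 \<longrightarrow>
      (\<exists>f0::real. \<exists>p0 fi bi. f0 > 0 \<and>
         (\<forall>e\<in>edges L1 L2. p0 e > 0) \<and> (\<forall>v. fi v \<ge> 0 \<and> bi v \<ge> 0) \<and>
         \<not> ((\<lambda>t. nuf (edges L1 L2)
                 (fst (traj g L1 L2 (\<lambda>_. 0) \<delta> (\<lambda>t. lam ^ t * f0) (\<lambda>t. lam ^ t * f0) p0 fi bi t))
                 Src (pv L1 L2 1 1)) \<longlonglongrightarrow> 1)))"
proof -
  have "L1 - 1 < L2 - 1" using assms(1,2) by simp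
  then obtain \<mu> r where \<mu>: "0 < \<mu>" "\<mu> < 1" and r: "0 < r" "r < 1"
    and root: "stationary_gap g (L1 - 1) (L2 - 1) \<mu> r = 0"
    using stationary_gap_root_exists[OF assms(3,4)] by blast
  have share: "0 < share g r (1 - r)" "share g r (1 - r) < 1"
    using share_at_gap_root[OF assms(3) r _ root] \<mu>(1) by auto
  have flow: "self_similar_flow g L1 L2 \<delta> \<mu> r" if "0 < \<delta>" "\<delta> < 1" for \<delta>
    using assms(1,2) that \<mu> share root by unfold_locales
  show ?thesis
  proof (rule exI[of _ "1 / \<mu>"], intro conjI allI impI)
    show "1 < 1 / \<mu>" using \<mu> by simp
  qed (use flow self_similar_flow.nonconvergent_configuration_exists in blast)
qed

end
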